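(* Let $R$ be a commutative ring with identity and $M$ a non-zero comultiplication $R$-module with $G'(M)$ non-null. Then the domination number satisfies $\gamma(G'(M))\le 2$. In particular, if $|\mathrm{Min}(M)|<\infty$, then $\gamma(G'(M))=2$.
   Context: An $R$-module $M$ is a comultiplication module if for every submodule $N$ of $M$ there is an ideal $I$ of $R$ with $N=\mathrm{Ann}_M(I)$. A submodule $N$ of $M$ is large if $N\cap L\neq 0$ for every non-zero submodule $L$ of $M$. $\mathrm{Min}(M)$ is the set of minimal submodules of $M$. The large sum graph $G'(M)$ has as vertex set the set of all non-zero non-large submodules of $M$, and two distinct vertices $N,K$ are adjacent iff $N+K$ is non-large in $M$. A set $S$ of vertices is dominating if every vertex lies in $S$ or is adjacent to a vertex of $S$; $\gamma(G)$ is the minimum cardinality of a dominating set. *)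

theory Defs
  imports "HOL-Algebra.Algebra" "HOL-Library.Extended_Nat"
begin

definition ann_mod :: "('a, 'c) ring_scheme \<Rightarrow> ('a, 'b, 'd) module_scheme \<Rightarrow> 'a set \<Rightarrow> 'b set" where
  "ann_mod R M I = {m \<in> carrier M. \<forall>r \<in> I. r \<odot>\<^bsub>M\<^esub> m = \<zero>\<^bsub>M\<^esub>}"

definition comultiplication_module :: "('a, 'c) ring_scheme \<Rightarrow> ('a, 'b, 'd) module_scheme \<Rightarrow> bool" where
  "comultiplication_module R M \<longleftrightarrow>
     (\<forall>N. submodule N R M \<longrightarrow> (\<exists>I. ideal I R \<and> N = ann_mod R M I))"

definition large_submodule :: "('a, 'c) ring_scheme \<Rightarrow> ('a, 'b, 'd) module_scheme \<Rightarrow> 'b set \<Rightarrow> bool" where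
  "large_submodule R M N \<longleftrightarrow> submodule N R M \<and>
     (\<forall>L. submodule L R M \<and> L \<noteq> {\<zero>\<^bsub>M\<^esub>} \<longrightarrow> N \<inter> L \<noteq> {\<zero>\<^bsub>M\<^esub>})"

definition min_submodules :: "('a, 'c) ring_scheme \<Rightarrow> ('a, 'b, 'd) module_scheme \<Rightarrow> 'b set set" where
  "min_submodules R M = {N. submodule N R M \<and> N \<noteq> {\<zero>\<^bsub>M\<^esub>} \<and>
     (\<forall>K. submodule K R M \<and> K \<subseteq> N \<and> K \<noteq> {\<zero>\<^bsub>M\<^esub>} \<longrightarrow> K = N)}"

definition lsg_vertices :: "('a, 'c) ring_scheme \<Rightarrow> ('a, 'b, 'd) module_scheme \<Rightarrow> 'b set set" where
  "lsg_vertices R M = {N. submodule N R M \<and> N \<noteq> {\<zero>\<^bsub>M\<^esub>} \<and> \<not> large_submodule R M N}"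

definition lsg_adj :: "('a, 'c) ring_scheme \<Rightarrow> ('a, 'b, 'd) module_scheme \<Rightarrow> 'b set \<Rightarrow> 'b set \<Rightarrow> bool" where
  "lsg_adj R M N K \<longleftrightarrow> N \<in> lsg_vertices R M \<and> K \<in> lsg_vertices R M \<and> N \<noteq> K \<and>
     \<not> large_submodule R M (N <+>\<^bsub>M\<^esub> K)"

definition lsg_non_null :: "('a, 'c) ring_scheme \<Rightarrow> ('a, 'b, 'd) module_scheme \<Rightarrow> bool" where
  "lsg_non_null R M \<longleftrightarrow> (\<exists>N K. lsg_adj R M N K)"

definition lsg_dominating :: "('a, 'c) ring_scheme \<Rightarrow> ('a, 'b, 'd) module_scheme \<Rightarrow> 'b set set \<Rightarrow> bool" where
  "lsg_dominating R M S \<longleftrightarrow> S \<subseteq> lsg_vertices R M \<and>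
     (\<forall>V \<in> lsg_vertices R M. V \<in> S \<or> (\<exists>W \<in> S. lsg_adj R M V W))"

definition lsg_domination_number :: "('a, 'c) ring_scheme \<Rightarrow> ('a, 'b, 'd) module_scheme \<Rightarrow> enat" where
  "lsg_domination_number R M =
     (INF S \<in> {S. lsg_dominating R M S}. (if finite S then enat (card S) else \<infinity>))"

end

theory Submission
  imports Defs
begin

(*
  Every submodule N has a complement V, maximal with V \<inter> N = 0 (Zorn), such that V + N
  is large.  When N is a vertex, so is V, and V is not adjacent to N; hence no single
  vertex dominates G'(M), and this part needs no hypothesis on M.

  In a comultiplication module A = Ann_M(Ann_R(A)), so V \<inter> L = 0 forces
  (V + A) \<inter> L \<subseteq> A: for l = v + a in L, every r killing A gives r l = r v \<in> V \<inter> L.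
  Now take a vertex N and L \<noteq> 0 with N \<inter> L = 0.  If a non-large V had both V + N and
  V + L large, choose L' \<noteq> 0 with V \<inter> L' = 0; then N \<inter> L' \<noteq> 0 and even L \<inter> N \<inter> L' \<noteq> 0,
  contradicting N \<inter> L = 0.  So {N, L} dominates, and the domination number is exactly 2
  whenever G'(M) has an edge, whether or not Min(M) is finite.
*)

lemma lsg_domination_number_le_card:
  assumes "lsg_dominating R M S" and "finite S"
  shows "lsg_domination_number R M \<le> enat (card S)"
  unfolding lsg_domination_number_def
  using assms by (intro INF_lower2[of S]) auto

lemma lsg_domination_number_ge:
  assumes "\<And>S. lsg_dominating R M S \<Longrightarrow> finite S \<Longrightarrow> n \<le> card S"
  shows "enat n \<le> lsg_domination_number R M"
  unfolding lsg_domination_number_def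
  using assms by (intro INF_greatest) auto

context module
begin

lemma submodule_zero_closed: "submodule H R M \<Longrightarrow> \<zero>\<^bsub>M\<^esub> \<in> H"
  using submodule.axioms(1) subgroup.one_closed by fastforce

lemma zero_submodule: "submodule {\<zero>\<^bsub>M\<^esub>} R M"
  by (rule submoduleI) auto

lemma submodule_Int:
  "submodule A R M \<Longrightarrow> submodule B R M \<Longrightarrow> submodule (A \<inter> B) R M"
  by (rule submoduleI) (use submoduleE[of A] submoduleE[of B] submodule_zero_closed in auto)

lemma mem_set_add_iff: "x \<in> A <+>\<^bsub>M\<^esub> B \<longleftrightarrow> (\<exists>a\<in>A. \<exists>b\<in>B. x = a \<oplus>\<^bsub>M\<^esub> b)"
  unfolding set_add_def' by auto

lemma set_add_upper1: "A \<subseteq> carrier M \<Longrightarrow> submodule B R M \<Longrightarrow> A \<subseteq> A <+>\<^bsub>M\<^esub> B"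
  using submodule_zero_closed by (force simp: mem_set_add_iff)

lemma set_add_upper2: "submodule A R M \<Longrightarrow> B \<subseteq> carrier M \<Longrightarrow> B \<subseteq> A <+>\<^bsub>M\<^esub> B"
  using submodule_zero_closed by (force simp: mem_set_add_iff)

lemma zero_set_add: "B \<subseteq> carrier M \<Longrightarrow> {\<zero>\<^bsub>M\<^esub>} <+>\<^bsub>M\<^esub> B = B"
  by (force simp: mem_set_add_iff)

lemma submodule_set_add:
  assumes A: "submodule A R M" and B: "submodule B R M"
  shows "submodule (A <+>\<^bsub>M\<^esub> B) R M"
proof (rule submoduleI)
  note A' = submoduleE[OF A] and B' = submoduleE[OF B]
  show "A <+>\<^bsub>M\<^esub> B \<subseteq> carrier M"
    using A'(1) B'(1) by (rule set_add_closed)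
  show "\<zero>\<^bsub>M\<^esub> \<in> A <+>\<^bsub>M\<^esub> B"
    using set_add_upper1[OF A'(1) B] submodule_zero_closed[OF A] by blast
  show "\<ominus>\<^bsub>M\<^esub> x \<in> A <+>\<^bsub>M\<^esub> B" if x: "x \<in> A <+>\<^bsub>M\<^esub> B" for x
  proof -
    obtain a b where "a \<in> A" "b \<in> B" "x = a \<oplus>\<^bsub>M\<^esub> b"
      using x by (auto simp: mem_set_add_iff)
    moreover then have "\<ominus>\<^bsub>M\<^esub> x = \<ominus>\<^bsub>M\<^esub> a \<oplus>\<^bsub>M\<^esub> \<ominus>\<^bsub>M\<^esub> b"
      using A'(1) B'(1) by (meson M.minus_add subsetD)
    ultimately show ?thesis
      using A'(3) B'(3) by (auto simp: mem_set_add_iff)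
  qed
  show "x \<oplus>\<^bsub>M\<^esub> y \<in> A <+>\<^bsub>M\<^esub> B" if x: "x \<in> A <+>\<^bsub>M\<^esub> B" and y: "y \<in> A <+>\<^bsub>M\<^esub> B" for x y
  proof -
    obtain a b where ab: "a \<in> A" "b \<in> B" "x = a \<oplus>\<^bsub>M\<^esub> b"
      using x by (auto simp: mem_set_add_iff)
    obtain a' b' where ab': "a' \<in> A" "b' \<in> B" "y = a' \<oplus>\<^bsub>M\<^esub> b'"
      using y by (auto simp: mem_set_add_iff)
    have "x \<oplus>\<^bsub>M\<^esub> y = (a \<oplus>\<^bsub>M\<^esub> a') \<oplus>\<^bsub>M\<^esub> (b \<oplus>\<^bsub>M\<^esub> b')"
      using ab ab' A'(1) B'(1) by (simp add: subset_iff M.a_ac)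
    then show ?thesis
      unfolding mem_set_add_iff using ab ab' A'(5) B'(5) by blast
  qed
  show "r \<odot>\<^bsub>M\<^esub> x \<in> A <+>\<^bsub>M\<^esub> B" if r: "r \<in> carrier R" and x: "x \<in> A <+>\<^bsub>M\<^esub> B" for r x
  proof -
    obtain a b where ab: "a \<in> A" "b \<in> B" "x = a \<oplus>\<^bsub>M\<^esub> b"
      using x by (auto simp: mem_set_add_iff)
    then have "r \<odot>\<^bsub>M\<^esub> x = r \<odot>\<^bsub>M\<^esub> a \<oplus>\<^bsub>M\<^esub> r \<odot>\<^bsub>M\<^esub> b"
      using A'(1) B'(1) r by (meson smult_r_distr subsetD)
    then show ?thesis
      unfolding mem_set_add_iff using ab r A'(4) B'(4) by blast
  qed
qed

lemma submodule_Union_chain: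
  assumes "C \<noteq> {}" and "\<And>P. P \<in> C \<Longrightarrow> submodule P R M" and "subset.chain UNIV C"
  shows "submodule (\<Union>C) R M"
proof (rule submoduleI)
  show "\<Union>C \<subseteq> carrier M"
    using assms(2) submoduleE(1) by blast
  show "\<zero>\<^bsub>M\<^esub> \<in> \<Union>C"
    using assms(1,2) submodule_zero_closed by blast
  show "\<ominus>\<^bsub>M\<^esub> a \<in> \<Union>C" if "a \<in> \<Union>C" for a
    using that assms(2) submoduleE(3) by blast
  show "r \<odot>\<^bsub>M\<^esub> x \<in> \<Union>C" if "r \<in> carrier R" "x \<in> \<Union>C" for r x
    using that assms(2) submoduleE(4) by blast
  show "a \<oplus>\<^bsub>M\<^esub> b \<in> \<Union>C" if ab: "a \<in> \<Union>C" "b \<in> \<Union>C" for a b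
  proof -
    obtain P Q where PQ: "P \<in> C" "Q \<in> C" "a \<in> P" "b \<in> Q"
      using ab by blast
    moreover have "P \<subseteq> Q \<or> Q \<subseteq> P"
      using assms(3) PQ(1,2) unfolding subset_chain_def by blast
    ultimately obtain S where "S \<in> C" "a \<in> S" "b \<in> S"
      by blast
    then show ?thesis
      using assms(2) submoduleE(5) by blast
  qed
qed

lemma not_large_submoduleE:
  assumes "submodule N R M" and "\<not> large_submodule R M N"
  obtains L where "submodule L R M" "L \<noteq> {\<zero>\<^bsub>M\<^esub>}" "N \<inter> L = {\<zero>\<^bsub>M\<^esub>}"
  using assms unfolding large_submodule_def by blast

lemma not_large_if_Int_zero:
  "N \<inter> L = {\<zero>\<^bsub>M\<^esub>} \<Longrightarrow> submodule N R M \<Longrightarrow> N \<noteq> {\<zero>\<^bsub>M\<^esub>} \<Longrightarrow> \<not> large_submodule R M L"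
  unfolding large_submodule_def by blast

lemma large_set_add_maximal_complement:
  assumes V: "submodule V R M" and N: "submodule N R M" and VN: "V \<inter> N = {\<zero>\<^bsub>M\<^esub>}"
    and maximal: "\<And>W. submodule W R M \<Longrightarrow> W \<inter> N = {\<zero>\<^bsub>M\<^esub>} \<Longrightarrow> V \<subseteq> W \<Longrightarrow> W = V"
  shows "large_submodule R M (V <+>\<^bsub>M\<^esub> N)"
  unfolding large_submodule_def
proof (intro conjI allI impI)
  show "submodule (V <+>\<^bsub>M\<^esub> N) R M"
    using V N by (rule submodule_set_add)
  fix K assume "submodule K R M \<and> K \<noteq> {\<zero>\<^bsub>M\<^esub>}"
  then have K: "submodule K R M" "K \<noteq> {\<zero>\<^bsub>M\<^esub>}"
    by blast+
  show "(V <+>\<^bsub>M\<^esub> N) \<inter> K \<noteq> {\<zero>\<^bsub>M\<^esub>}"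
  proof
    assume VNK: "(V <+>\<^bsub>M\<^esub> N) \<inter> K = {\<zero>\<^bsub>M\<^esub>}"
    have "(V <+>\<^bsub>M\<^esub> K) \<inter> N \<subseteq> {\<zero>\<^bsub>M\<^esub>}"
    proof
      fix x assume x: "x \<in> (V <+>\<^bsub>M\<^esub> K) \<inter> N"
      then obtain v k where vk: "v \<in> V" "k \<in> K" "x = v \<oplus>\<^bsub>M\<^esub> k"
        by (auto simp: mem_set_add_iff)
      have v: "v \<in> carrier M" and k: "k \<in> carrier M"
        using vk V K submoduleE(1) by blast+
      have "k = \<ominus>\<^bsub>M\<^esub> v \<oplus>\<^bsub>M\<^esub> x"
        using vk(3) v k by (simp add: M.a_assoc[symmetric] M.l_neg)
      then have "k \<in> V <+>\<^bsub>M\<^esub> N"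
        using x vk(1) V submoduleE(3) by (auto simp: mem_set_add_iff)
      then have "k = \<zero>\<^bsub>M\<^esub>"
        using VNK vk(2) by blast
      then have "x = v"
        using vk(3) v by simp
      then show "x \<in> {\<zero>\<^bsub>M\<^esub>}"
        using VN vk(1) x by blast
    qed
    moreover have VK: "submodule (V <+>\<^bsub>M\<^esub> K) R M"
      using V K(1) by (rule submodule_set_add)
    ultimately have "(V <+>\<^bsub>M\<^esub> K) \<inter> N = {\<zero>\<^bsub>M\<^esub>}"
      using N submodule_zero_closed by blast
    then have "V <+>\<^bsub>M\<^esub> K = V"
      using maximal[OF VK] set_add_upper1[OF submoduleE(1)[OF V] K(1)] by blast
    then have "K \<subseteq> V"
      using set_add_upper2[OF V submoduleE(1)[OF K(1)]] by blast
    then have "K \<subseteq> V <+>\<^bsub>M\<^esub> N"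
      using set_add_upper1[OF submoduleE(1)[OF V] N] by blast
    then show False
      using VNK K(2) by blast
  qed
qed

lemma exists_maximal_complement:
  assumes N: "submodule N R M"
  obtains V where "submodule V R M" "V \<inter> N = {\<zero>\<^bsub>M\<^esub>}"
    "\<And>W. submodule W R M \<Longrightarrow> W \<inter> N = {\<zero>\<^bsub>M\<^esub>} \<Longrightarrow> V \<subseteq> W \<Longrightarrow> W = V"
proof -
  define F where "F = {W. submodule W R M \<and> W \<inter> N = {\<zero>\<^bsub>M\<^esub>}}"
  have "{\<zero>\<^bsub>M\<^esub>} \<in> F"
    unfolding F_def using zero_submodule submodule_zero_closed[OF N] by blast
  then have "F \<noteq> {}"
    by blast
  moreover have "\<Union>C \<in> F" if "C \<noteq> {}" "subset.chain F C" for C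
  proof -
    have "subset.chain UNIV C" and "C \<subseteq> F"
      using that(2) unfolding subset_chain_def by blast+
    then have "submodule (\<Union>C) R M"
      using submodule_Union_chain[OF that(1)] unfolding F_def by blast
    moreover have "\<Union>C \<inter> N = {\<zero>\<^bsub>M\<^esub>}"
      using \<open>C \<subseteq> F\<close> that(1) unfolding F_def by blast
    ultimately show ?thesis
      unfolding F_def by blast
  qed
  ultimately obtain V where "V \<in> F" "\<forall>W\<in>F. V \<subseteq> W \<longrightarrow> W = V"
    using subset_Zorn_nonempty[of F] by blast
  then show thesis
    by (intro that) (auto simp: F_def)
qed

lemma exists_complement_large_set_add:
  assumes N: "submodule N R M"
  obtains V where "submodule V R M" "V \<inter> N = {\<zero>\<^bsub>M\<^esub>}" "large_submodule R M (V <+>\<^bsub>M\<^esub> N)"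
proof -
  obtain V where "submodule V R M" "V \<inter> N = {\<zero>\<^bsub>M\<^esub>}"
    "\<And>W. submodule W R M \<Longrightarrow> W \<inter> N = {\<zero>\<^bsub>M\<^esub>} \<Longrightarrow> V \<subseteq> W \<Longrightarrow> W = V"
    using exists_maximal_complement[OF N] by blast
  then show thesis
    using that large_set_add_maximal_complement[OF _ N] by blast
qed

lemma comultiplication_memI:
  assumes "comultiplication_module R M" and A: "submodule A R M" and x: "x \<in> carrier M"
    and ann: "\<And>r. r \<in> carrier R \<Longrightarrow> (\<forall>a\<in>A. r \<odot>\<^bsub>M\<^esub> a = \<zero>\<^bsub>M\<^esub>) \<Longrightarrow> r \<odot>\<^bsub>M\<^esub> x = \<zero>\<^bsub>M\<^esub>"
  shows "x \<in> A"
proof -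
  obtain I where I: "ideal I R" "A = ann_mod R M I"
    using assms(1) A unfolding comultiplication_module_def by blast
  have "I \<subseteq> carrier R"
    using I(1) ideal.axioms(1) additive_subgroup.a_subset by blast
  then have "\<forall>r\<in>I. r \<odot>\<^bsub>M\<^esub> x = \<zero>\<^bsub>M\<^esub>"
    using ann I(2) unfolding ann_mod_def by blast
  then show ?thesis
    using I(2) x unfolding ann_mod_def by blast
qed

lemma comultiplication_set_add_Int_subset:
  assumes cm: "comultiplication_module R M"
    and V: "submodule V R M" and A: "submodule A R M" and L: "submodule L R M"
    and VL: "V \<inter> L = {\<zero>\<^bsub>M\<^esub>}"
  shows "(V <+>\<^bsub>M\<^esub> A) \<inter> L \<subseteq> A"
proof
  fix l assume l: "l \<in> (V <+>\<^bsub>M\<^esub> A) \<inter> L"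
  then obtain v a where va: "v \<in> V" "a \<in> A" "l = v \<oplus>\<^bsub>M\<^esub> a"
    by (auto simp: mem_set_add_iff)
  have v: "v \<in> carrier M" and a: "a \<in> carrier M"
    using va V A submoduleE(1) by blast+
  show "l \<in> A"
  proof (rule comultiplication_memI[OF cm A])
    show "l \<in> carrier M"
      using l L submoduleE(1) by blast
    fix r assume r: "r \<in> carrier R" and "\<forall>a\<in>A. r \<odot>\<^bsub>M\<^esub> a = \<zero>\<^bsub>M\<^esub>"
    then have "r \<odot>\<^bsub>M\<^esub> l = r \<odot>\<^bsub>M\<^esub> v"
      using va v a by (simp add: smult_r_distr)
    moreover have "r \<odot>\<^bsub>M\<^esub> l \<in> L" and "r \<odot>\<^bsub>M\<^esub> v \<in> V"
      using l va r L V submoduleE(4) by blast+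
    ultimately have "r \<odot>\<^bsub>M\<^esub> l \<in> V \<inter> L"
      by simp
    then show "r \<odot>\<^bsub>M\<^esub> l = \<zero>\<^bsub>M\<^esub>"
      using VL by simp
  qed
qed

lemma comultiplication_large_set_add_Int:
  assumes cm: "comultiplication_module R M"
    and V: "submodule V R M" and A: "submodule A R M" and L: "submodule L R M"
    and VL: "V \<inter> L = {\<zero>\<^bsub>M\<^esub>}" and "L \<noteq> {\<zero>\<^bsub>M\<^esub>}" and "large_submodule R M (V <+>\<^bsub>M\<^esub> A)"
  shows "A \<inter> L \<noteq> {\<zero>\<^bsub>M\<^esub>}"
proof -
  have "(V <+>\<^bsub>M\<^esub> A) \<inter> L \<noteq> {\<zero>\<^bsub>M\<^esub>}"
    using assms(6,7) L unfolding large_submodule_def by blast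
  moreover have "(V <+>\<^bsub>M\<^esub> A) \<inter> L \<subseteq> A \<inter> L"
    using comultiplication_set_add_Int_subset[OF cm V A L VL] by blast
  moreover have "\<zero>\<^bsub>M\<^esub> \<in> (V <+>\<^bsub>M\<^esub> A) \<inter> L"
    using submodule_set_add[OF V A] L submodule_zero_closed by blast
  ultimately show ?thesis
    by blast
qed

lemma comultiplication_not_large_set_add:
  assumes cm: "comultiplication_module R M"
    and A: "submodule A R M" and B: "submodule B R M" and AB: "A \<inter> B = {\<zero>\<^bsub>M\<^esub>}"
    and V: "submodule V R M" and "\<not> large_submodule R M V"
  shows "\<not> large_submodule R M (V <+>\<^bsub>M\<^esub> A) \<or> \<not> large_submodule R M (V <+>\<^bsub>M\<^esub> B)"
proof (rule ccontr)
  assume "\<not> ?thesis"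
  then have lA: "large_submodule R M (V <+>\<^bsub>M\<^esub> A)" and lB: "large_submodule R M (V <+>\<^bsub>M\<^esub> B)"
    by blast+
  obtain L where L: "submodule L R M" "L \<noteq> {\<zero>\<^bsub>M\<^esub>}" "V \<inter> L = {\<zero>\<^bsub>M\<^esub>}"
    using V assms(6) by (rule not_large_submoduleE)
  have AL: "A \<inter> L \<noteq> {\<zero>\<^bsub>M\<^esub>}"
    using comultiplication_large_set_add_Int[OF cm V A L(1,3,2) lA] .
  have "V \<inter> (A \<inter> L) = {\<zero>\<^bsub>M\<^esub>}"
    using L(3) A submodule_zero_closed V by blast
  then have "B \<inter> (A \<inter> L) \<noteq> {\<zero>\<^bsub>M\<^esub>}"
    using comultiplication_large_set_add_Int[OF cm V B submodule_Int[OF A L(1)] _ AL lB] by blast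
  then show False
    using AB B A L(1) submodule_zero_closed by blast
qed

lemma lsg_vertex_large_set_add_partner:
  assumes "N \<in> lsg_vertices R M"
  obtains V where "V \<in> lsg_vertices R M" "V \<noteq> N" "large_submodule R M (V <+>\<^bsub>M\<^esub> N)"
proof -
  have N: "submodule N R M" "N \<noteq> {\<zero>\<^bsub>M\<^esub>}" "\<not> large_submodule R M N"
    using assms unfolding lsg_vertices_def by blast+
  obtain V where V: "submodule V R M" "V \<inter> N = {\<zero>\<^bsub>M\<^esub>}" "large_submodule R M (V <+>\<^bsub>M\<^esub> N)"
    using N(1) by (rule exists_complement_large_set_add)
  have "V \<noteq> {\<zero>\<^bsub>M\<^esub>}"
    using V(3) N(1,3) zero_set_add submoduleE(1) by metis
  moreover have "\<not> large_submodule R M V"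
    using not_large_if_Int_zero[OF _ N(1,2)] V(2) by blast
  moreover have "V \<noteq> N"
    using V(2) N(2) by blast
  ultimately show thesis
    using that V unfolding lsg_vertices_def by blast
qed

lemma lsg_dominating_card_ge_2:
  assumes "lsg_vertices R M \<noteq> {}" and S: "lsg_dominating R M S" and "finite S"
  shows "2 \<le> card S"
proof -
  obtain W where "W \<in> S"
    using assms(1) S unfolding lsg_dominating_def by blast
  then have "W \<in> lsg_vertices R M"
    using S unfolding lsg_dominating_def by blast
  then obtain V where "V \<in> lsg_vertices R M" "V \<noteq> W" "large_submodule R M (V <+>\<^bsub>M\<^esub> W)"
    by (rule lsg_vertex_large_set_add_partner)
  moreover obtain U where "U \<in> S" "V = U \<or> lsg_adj R M V U"
    using S \<open>V \<in> lsg_vertices R M\<close> unfolding lsg_dominating_def by blast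
  ultimately have "U \<noteq> W"
    unfolding lsg_adj_def by auto
  then have "card {U, W} \<le> card S"
    using \<open>U \<in> S\<close> \<open>W \<in> S\<close> \<open>finite S\<close> by (intro card_mono) auto
  then show ?thesis
    using \<open>U \<noteq> W\<close> by simp
qed

lemma comultiplication_lsg_dominating_pair:
  assumes cm: "comultiplication_module R M"
    and N: "N \<in> lsg_vertices R M" and L: "submodule L R M" "L \<noteq> {\<zero>\<^bsub>M\<^esub>}" "N \<inter> L = {\<zero>\<^bsub>M\<^esub>}"
  shows "lsg_dominating R M {N, L}"
  unfolding lsg_dominating_def
proof (intro conjI ballI)
  have N': "submodule N R M" "N \<noteq> {\<zero>\<^bsub>M\<^esub>}"
    using N unfolding lsg_vertices_def by blast+
  then have "L \<in> lsg_vertices R M"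
    using L not_large_if_Int_zero[OF L(3)] unfolding lsg_vertices_def by blast
  then show "{N, L} \<subseteq> lsg_vertices R M"
    using N by blast
  fix V assume V: "V \<in> lsg_vertices R M"
  then consider "\<not> large_submodule R M (V <+>\<^bsub>M\<^esub> N)" | "\<not> large_submodule R M (V <+>\<^bsub>M\<^esub> L)"
    using comultiplication_not_large_set_add[OF cm N'(1) L(1) L(3)]
    unfolding lsg_vertices_def by blast
  then show "V \<in> {N, L} \<or> (\<exists>W\<in>{N, L}. lsg_adj R M V W)"
  proof cases
    case 1
    then have "V = N \<or> lsg_adj R M V N"
      using V N unfolding lsg_adj_def by simp
    then show ?thesis
      by (elim disjE) simp_all
  next
    case 2
    then have "V = L \<or> lsg_adj R M V L"
      using V \<open>L \<in> lsg_vertices R M\<close> unfolding lsg_adj_def by simp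
    then show ?thesis
      by (elim disjE) simp_all
  qed
qed

lemma comultiplication_lsg_domination_number_eq_2:
  assumes cm: "comultiplication_module R M" and "lsg_non_null R M"
  shows "lsg_domination_number R M = 2"
proof -
  obtain N where N: "N \<in> lsg_vertices R M"
    using assms(2) unfolding lsg_non_null_def lsg_adj_def by blast
  then have "submodule N R M" "\<not> large_submodule R M N"
    unfolding lsg_vertices_def by blast+
  then obtain L where L: "submodule L R M" "L \<noteq> {\<zero>\<^bsub>M\<^esub>}" "N \<inter> L = {\<zero>\<^bsub>M\<^esub>}"
    by (rule not_large_submoduleE)
  then have "N \<noteq> L"
    by blast
  then have "lsg_domination_number R M \<le> enat 2"
    using lsg_domination_number_le_card[OF comultiplication_lsg_dominating_pair[OF cm N L]]
    by (simp add: numeral_2_eq_2)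
  moreover have "enat 2 \<le> lsg_domination_number R M"
    using lsg_dominating_card_ge_2 N by (intro lsg_domination_number_ge) blast
  ultimately show ?thesis
    by (metis antisym numeral_eq_enat)
qed

end

theorem theorem3p3:
  fixes R :: "('a, 'c) ring_scheme" and M :: "('a, 'b, 'd) module_scheme"
  assumes "cring R" and "module R M"
    and "carrier M \<noteq> {\<zero>\<^bsub>M\<^esub>}"
    and "comultiplication_module R M"
    and "lsg_non_null R M"
  shows "lsg_domination_number R M \<le> 2 \<and>
         (finite (min_submodules R M) \<longrightarrow> lsg_domination_number R M = 2)"
  using module.comultiplication_lsg_domination_number_eq_2[OF assms(2,4,5)] by simp

end
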